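(* Let $Q=(-\frac12,\frac12)^N$ and let $f:\mathbb{R}^N\times\mathbb{R}^d\to[0,+\infty)$ be measurable and $Q$-periodic in the first variable, satisfying $C_1|\zeta|\le f(x,\zeta)\le C_2(1+|\zeta|)$, and Lipschitz continuous in the second variable with Lipschitz constant $L>0$, i.e. $|f(x,\zeta_1)-f(x,\zeta_2)|\le L|\zeta_1-\zeta_2|$ for all $x,\zeta_1,\zeta_2$. Let $\mathcal{A}=\sum_{i=1}^NA^{(i)}\partial_{x_i}$ with $A^{(i)}\in\mathbb{R}^{M\times d}$. Define, for $b\in\mathbb{R}^d$, $$f_{\mathcal{A}\text{-hom}}(b):=\inf_{R\in\mathbb{N}}\inf\Big\{\frac{1}{|RQ|}\int_{RQ}f(x,b+w(x))\,dx:\ w\in L^1_{RQ\text{-per}}(\mathbb{R}^N;\mathbb{R}^d),\ \mathcal{A}w=0,\ \frac{1}{|RQ|}\int_{RQ}w=0\Big\}.$$ Then $f_{\mathcal{A}\text{-hom}}:\mathbb{R}^d\to\mathbb{R}$ is Lipschitz continuous with Lipschitz constant $L$.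
   Context: $L^1_{RQ\text{-per}}(\mathbb{R}^N;\mathbb{R}^d)$ denotes functions integrable on $RQ$ extended $RQ$-periodically to $\mathbb{R}^N$; $\mathcal{A}w=0$ is meant in the sense of distributions on $\mathbb{R}^N$. *)

theory Defs
  imports "HOL-Analysis.Analysis"
begin

definition cubeQ :: "real \<Rightarrow> (real ^ 'n) set" where
  "cubeQ R = {x. \<forall>i. -(R/2) < x $ i \<and> x $ i < R/2}"

coinductive Cinf :: "('a::euclidean_space \<Rightarrow> real) \<Rightarrow> bool" where
  "(\<forall>x. g differentiable (at x)) \<Longrightarrow>
   (\<forall>v\<in>Basis. Cinf (\<lambda>x. frechet_derivative g (at x) v)) \<Longrightarrow> Cinf g"

definition test_fun :: "('a::euclidean_space \<Rightarrow> real) \<Rightarrow> bool" where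
  "test_fun \<phi> \<longleftrightarrow> Cinf \<phi> \<and> compact (closure {x. \<phi> x \<noteq> 0})"

definition pderiv_i :: "'n \<Rightarrow> (real ^ 'n \<Rightarrow> real) \<Rightarrow> real ^ 'n \<Rightarrow> real" where
  "pderiv_i i \<phi> x = frechet_derivative \<phi> (at x) (axis i 1)"

text \<open>\<A> w = 0 in the sense of distributions on R^N, where
  \<A> = sum_i A(i) d/dx_i, A(i) an M x d matrix.\<close>
definition A_free :: "('n::finite \<Rightarrow> real ^ 'd ^ 'm) \<Rightarrow> (real ^ 'n \<Rightarrow> real ^ 'd) \<Rightarrow> bool" where
  "A_free A w \<longleftrightarrow> (\<forall>\<phi>. test_fun \<phi> \<longrightarrow>
      (\<Sum>i\<in>UNIV. A i *v (\<integral>x. pderiv_i i \<phi> x *\<^sub>R w x \<partial>lborel)) = 0)"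

definition L1_per :: "nat \<Rightarrow> (real ^ 'n::finite \<Rightarrow> real ^ 'd) \<Rightarrow> bool" where
  "L1_per R w \<longleftrightarrow> set_integrable lborel (cubeQ (real R)) w \<and>
      (\<forall>x i. w (x + real R *\<^sub>R axis i 1) = w x)"

definition admissible :: "('n::finite \<Rightarrow> real ^ 'd ^ 'm) \<Rightarrow> nat \<Rightarrow> (real ^ 'n \<Rightarrow> real ^ 'd) set" where
  "admissible A R = {w. L1_per R w \<and> A_free A w \<and>
      (LINT x : cubeQ (real R) | lborel. w x) = 0}"

definition f_hom :: "(real ^ 'n::finite \<Rightarrow> real ^ 'd \<Rightarrow> real) \<Rightarrow> ('n \<Rightarrow> real ^ 'd ^ 'm)
     \<Rightarrow> real ^ 'd \<Rightarrow> real" where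
  "f_hom f A b = (INF R \<in> {1::nat..}. INF w \<in> admissible A R.
      (1 / measure lborel (cubeQ (real R) :: (real ^ 'n) set)) * (LINT x : cubeQ (real R) | lborel. f x (b + w x)))"

end

theory Submission
  imports Defs
begin

text \<open>For a fixed admissible field \<open>w\<close>, the average of \<open>f x (b + w x)\<close> over \<open>RQ\<close> is
  \<open>L\<close>-Lipschitz in \<open>b\<close>, because the integrand is so pointwise. The averages are
  nonnegative and the zero field is admissible for every \<open>R\<close>, so \<open>f_hom f A\<close> is a
  double infimum of nonempty, pointwise bounded below families of \<open>L\<close>-Lipschitz
  functions, and such an infimum is again \<open>L\<close>-Lipschitz.\<close>

lemma cubeQ_eq_box: "cubeQ R = box (\<chi> i. - (R / 2)) (\<chi> i. R / 2 :: real ^ 'n)"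
  by (auto simp: cubeQ_def mem_box_cart)

lemma sets_cubeQ [measurable]: "cubeQ R \<in> sets lborel"
  by (simp add: cubeQ_eq_box)

lemma emeasure_cubeQ_finite: "emeasure lborel (cubeQ R :: (real ^ 'n) set) < \<infinity>"
  unfolding cubeQ_eq_box by (rule emeasure_bounded_finite) simp

lemma zero_in_admissible: "(\<lambda>_. 0) \<in> admissible A R"
  by (simp add: admissible_def L1_per_def A_free_def set_integrable_def)

lemma set_integrable_const:
  fixes c :: "'b::{banach, second_countable_topology}"
  assumes "S \<in> sets M" "emeasure M S < \<infinity>"
  shows "set_integrable M S (\<lambda>_. c)"
  using assms unfolding set_integrable_def by (rule integrable_indicator)

lemma set_integrable_linear_growth_comp:
  fixes f :: "'a::euclidean_space \<Rightarrow> 'b::euclidean_space \<Rightarrow> real"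
  assumes meas: "(\<lambda>(x, z). f x z) \<in> borel_measurable borel"
    and growth: "\<And>x z. \<bar>f x z\<bar> \<le> C * (1 + norm z)"
    and S: "S \<in> sets lborel" "emeasure lborel S < \<infinity>"
    and w: "set_integrable lborel S w"
  shows "set_integrable lborel S (\<lambda>x. f x (w x))"
proof (rule set_integrable_bound)
  show "set_integrable lborel S (\<lambda>x. C * (1 + norm (w x)))"
    using set_integrable_const[OF S] set_integrable_norm[OF w]
    by (intro set_integrable_mult_right set_integral_add)
  have "(\<lambda>x. indicator S x *\<^sub>R w x) \<in> borel_measurable lborel"
    using w unfolding set_integrable_def by auto
  then have "(\<lambda>x. (x, indicator S x *\<^sub>R w x)) \<in> lborel \<rightarrow>\<^sub>M (borel :: ('a \<times> 'b) measure)"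
    unfolding borel_prod[symmetric] by (intro measurable_Pair) auto
  from measurable_compose[OF this meas]
  have "(\<lambda>x. indicator S x *\<^sub>R f x (indicator S x *\<^sub>R w x)) \<in> borel_measurable lborel"
    using S by (intro borel_measurable_scaleR borel_measurable_indicator) auto
  moreover have "(\<lambda>x. indicator S x *\<^sub>R f x (indicator S x *\<^sub>R w x))
      = (\<lambda>x. indicator S x *\<^sub>R f x (w x))"
    by (auto simp: indicator_def)
  ultimately show "set_borel_measurable lborel S (\<lambda>x. f x (w x))"
    by (simp add: set_borel_measurable_def)
  show "AE x in lborel. x \<in> S \<longrightarrow> norm (f x (w x)) \<le> norm (C * (1 + norm (w x)))"
    using growth by (auto intro: order_trans[OF _ abs_ge_self])
qed

lemma lipschitz_on_set_average:
  fixes g :: "'b::metric_space \<Rightarrow> 'a \<Rightarrow> real"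
  assumes S: "S \<in> sets M" "emeasure M S < \<infinity>"
    and integrable: "\<And>b. b \<in> U \<Longrightarrow> set_integrable M S (g b)"
    and lip: "\<And>x. x \<in> S \<Longrightarrow> lipschitz_on L U (\<lambda>b. g b x)"
    and "0 \<le> L"
  shows "lipschitz_on L U (\<lambda>b. (1 / measure M S) * (LINT x:S|M. g b x))"
proof (rule lipschitz_onI)
  fix b b' assume b: "b \<in> U" and b': "b' \<in> U"
  have diff: "set_integrable M S (\<lambda>x. g b x - g b' x)"
    using integrable[OF b] integrable[OF b'] by (rule set_integral_diff)
  have "\<bar>(LINT x:S|M. g b x) - (LINT x:S|M. g b' x)\<bar> = \<bar>LINT x:S|M. g b x - g b' x\<bar>"
    using integrable[OF b] integrable[OF b'] by (simp add: set_integral_diff)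
  also have "\<dots> \<le> (LINT x:S|M. \<bar>g b x - g b' x\<bar>)"
    using set_integral_norm_bound[OF diff] by simp
  also have "\<dots> \<le> (LINT x:S|M. L * dist b b')"
  proof (rule set_integral_mono)
    show "set_integrable M S (\<lambda>x. \<bar>g b x - g b' x\<bar>)"
      using diff by (rule set_integrable_abs)
    show "set_integrable M S (\<lambda>x. L * dist b b')"
      using S by (rule set_integrable_const)
    show "\<bar>g b x - g b' x\<bar> \<le> L * dist b b'" if "x \<in> S" for x
      using lipschitz_onD[OF lip[OF that] b b'] by (simp add: dist_real_def)
  qed
  also have "\<dots> = measure M S * (L * dist b b')"
    unfolding set_integral_const[OF S(1) less_imp_neq[OF S(2)]] by simp
  finally have bound:
    "\<bar>(LINT x:S|M. g b x) - (LINT x:S|M. g b' x)\<bar> \<le> measure M S * (L * dist b b')" .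
  have "dist ((1 / measure M S) * (LINT x:S|M. g b x)) ((1 / measure M S) * (LINT x:S|M. g b' x))
      = \<bar>(LINT x:S|M. g b x) - (LINT x:S|M. g b' x)\<bar> / measure M S"
    by (simp add: dist_real_def diff_divide_distrib[symmetric] abs_divide)
  also have "\<dots> \<le> measure M S * (L * dist b b') / measure M S"
    using bound by (rule divide_right_mono) simp
  also have "\<dots> \<le> L * dist b b'"
    using \<open>0 \<le> L\<close> by (cases "measure M S = 0") simp_all
  finally show "dist ((1 / measure M S) * (LINT x:S|M. g b x)) ((1 / measure M S) * (LINT x:S|M. g b' x))
      \<le> L * dist b b'" .
qed (fact \<open>0 \<le> L\<close>)

lemma lipschitz_on_INF:
  fixes g :: "'i \<Rightarrow> 'a::metric_space \<Rightarrow> real"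
  assumes "I \<noteq> {}"
    and lip: "\<And>i. i \<in> I \<Longrightarrow> lipschitz_on L U (g i)"
    and bdd: "\<And>x. x \<in> U \<Longrightarrow> bdd_below ((\<lambda>i. g i x) ` I)"
  shows "lipschitz_on L U (\<lambda>x. INF i\<in>I. g i x)"
proof (rule lipschitz_onI)
  have INF_le: "(INF i\<in>I. g i x) \<le> (INF i\<in>I. g i y) + L * dist x y"
    if x: "x \<in> U" and y: "y \<in> U" for x y
  proof -
    have "(INF i\<in>I. g i x) - L * dist x y \<le> g i y" if i: "i \<in> I" for i
    proof -
      have "(INF i\<in>I. g i x) \<le> g i x"
        by (rule cINF_lower[OF bdd[OF x] i])
      also have "\<dots> \<le> g i y + L * dist x y"
        using lipschitz_onD[OF lip[OF i] x y] by (simp add: dist_real_def)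
      finally show ?thesis by simp
    qed
    then have "(INF i\<in>I. g i x) - L * dist x y \<le> (INF i\<in>I. g i y)"
      using \<open>I \<noteq> {}\<close> by (intro cINF_greatest)
    then show ?thesis by simp
  qed
  show "dist (INF i\<in>I. g i x) (INF i\<in>I. g i y) \<le> L * dist x y" if "x \<in> U" "y \<in> U" for x y
    using INF_le[OF that] INF_le[OF that(2,1)] by (simp add: dist_real_def dist_commute abs_le_iff)
  show "0 \<le> L"
    using \<open>I \<noteq> {}\<close> lip lipschitz_on_nonneg by blast
qed

lemma lipschitz_on_set_average_shift:
  fixes f :: "'a::euclidean_space \<Rightarrow> 'b::euclidean_space \<Rightarrow> real"
  assumes meas: "(\<lambda>(x, z). f x z) \<in> borel_measurable borel"
    and growth: "\<And>x z. \<bar>f x z\<bar> \<le> C * (1 + norm z)"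
    and lip: "\<And>x z1 z2. \<bar>f x z1 - f x z2\<bar> \<le> L * norm (z1 - z2)"
    and "0 \<le> L"
    and S: "S \<in> sets lborel" "emeasure lborel S < \<infinity>"
    and w: "set_integrable lborel S w"
  shows "lipschitz_on L UNIV (\<lambda>b. (1 / measure lborel S) * (LINT x:S|lborel. f x (b + w x)))"
proof (rule lipschitz_on_set_average[OF S _ _ \<open>0 \<le> L\<close>])
  have "set_integrable lborel S (\<lambda>x. b + w x)" for b
    using set_integrable_const[OF S] w by (rule set_integral_add(1))
  then show "set_integrable lborel S (\<lambda>x. f x (b + w x))" for b
    by (rule set_integrable_linear_growth_comp[OF meas growth S])
  show "lipschitz_on L UNIV (\<lambda>b. f x (b + w x))" for x
  proof (rule lipschitz_onI)
    show "dist (f x (b + w x)) (f x (b' + w x)) \<le> L * dist b b'" for b b'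
      using lip[of x "b + w x" "b' + w x"] by (simp add: dist_real_def dist_norm)
  qed (fact \<open>0 \<le> L\<close>)
qed

theorem proposition2p14:
  fixes f :: "real ^ 'n::finite \<Rightarrow> real ^ 'd::finite \<Rightarrow> real"
    and A :: "'n \<Rightarrow> real ^ 'd ^ 'm::finite"
    and C1 C2 L :: real
  assumes meas: "(\<lambda>(x, z). f x z) \<in> borel_measurable borel"
    and nonneg: "\<And>x z. 0 \<le> f x z"
    and per: "\<And>x z i. f (x + axis i 1) z = f x z"
    and C1: "0 < C1" and C2: "0 < C2"
    and growth: "\<And>x z. C1 * norm z \<le> f x z \<and> f x z \<le> C2 * (1 + norm z)"
    and L: "0 < L"
    and lip: "\<And>x z1 z2. \<bar>f x z1 - f x z2\<bar> \<le> L * norm (z1 - z2)"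
  shows "lipschitz_on L UNIV (f_hom f A)"
proof -
  define avg where "avg R w b = (1 / measure lborel (cubeQ (real R) :: (real ^ 'n) set)) *
      (LINT x : cubeQ (real R) | lborel. f x (b + w x))"
    for R :: nat and w :: "real ^ 'n \<Rightarrow> real ^ 'd" and b
  have avg_nonneg: "0 \<le> avg R w b" for R w b
    unfolding avg_def set_lebesgue_integral_def using nonneg
    by (intro mult_nonneg_nonneg integral_nonneg_AE) auto
  have avg_lipschitz: "lipschitz_on L UNIV (avg R w)" if "w \<in> admissible A R" for R w
    unfolding avg_def
  proof (rule lipschitz_on_set_average_shift[OF meas _ lip _ sets_cubeQ emeasure_cubeQ_finite])
    show "\<bar>f x z\<bar> \<le> C2 * (1 + norm z)" for x z
      using nonneg growth by (simp add: abs_of_nonneg)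
    show "set_integrable lborel (cubeQ (real R)) w"
      using that by (simp add: admissible_def L1_per_def)
  qed (use L in simp)
  have inf_avg_lipschitz: "lipschitz_on L UNIV (\<lambda>b. INF w \<in> admissible A R. avg R w b)" for R
    using zero_in_admissible[of A R] avg_lipschitz avg_nonneg
    by (intro lipschitz_on_INF bdd_belowI2) auto
  have inf_avg_nonneg: "0 \<le> (INF w \<in> admissible A R. avg R w b)" for R b
    using zero_in_admissible[of A R] avg_nonneg by (intro cINF_greatest) auto
  have f_hom_eq: "f_hom f A = (\<lambda>b. INF R \<in> {1..}. INF w \<in> admissible A R. avg R w b)"
    unfolding f_hom_def avg_def ..
  show ?thesis
    unfolding f_hom_eq
    by (rule lipschitz_on_INF) (auto intro!: bdd_belowI2 inf_avg_lipschitz inf_avg_nonneg)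
qed

end
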